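(* Let $(\Omega,\mathcal{F},\mathbb{P})$ be a probability space, $k$ a positive integer, $\mathcal{S}$ a $k$-semiring on $\Omega$ with $\mathcal{S}\subseteq\mathcal{F}$, and $f\in L_1(\Omega,\mathcal{F},\mathbb{P})$. Then: (a) $\|f\|_{\mathcal{S}}\le\|f\|_{L_1}$. (b) If $\mathcal{B}$ is a $\sigma$-algebra on $\Omega$ with $\mathcal{B}\subseteq\mathcal{S}$, then $\|\mathbb{E}(f\mid\mathcal{B})\|_{\mathcal{S}}\le\|f\|_{\mathcal{S}}$. (c) If $\mathcal{S}$ is a $\sigma$-algebra, then $\|f\|_{\mathcal{S}}\le\|\mathbb{E}(f\mid\mathcal{S})\|_{L_1}\le 2\|f\|_{\mathcal{S}}$.
   Context: A collection $\mathcal{S}$ of subsets of a nonempty set $\Omega$ is a $k$-semiring on $\Omega$ if: $\emptyset,\Omega\in\mathcal{S}$; $S\cap T\in\mathcal{S}$ for $S,T\in\mathcal{S}$; for $S,T\in\mathcal{S}$ there exist $\ell\in\{1,\dots,k\}$ and pairwise disjoint $R_1,\dots,R_\ell\in\mathcal{S}$ with $S\setminus T=R_1\cup\dots\cup R_\ell$. The $\mathcal{S}$-uniformity norm is $\|f\|_{\mathcal{S}}=\sup\{|\int_S f\,d\mathbb{P}|:S\in\mathcal{S}\}$. *)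

theory Defs
  imports "HOL-Probability.Probability"
begin

definition k_semiring :: "'a set \<Rightarrow> nat \<Rightarrow> 'a set set \<Rightarrow> bool" where
  "k_semiring \<Omega> k \<S> \<longleftrightarrow>
     \<S> \<subseteq> Pow \<Omega> \<and> {} \<in> \<S> \<and> \<Omega> \<in> \<S> \<and>
     (\<forall>S\<in>\<S>. \<forall>T\<in>\<S>. S \<inter> T \<in> \<S>) \<and>
     (\<forall>S\<in>\<S>. \<forall>T\<in>\<S>. \<exists>l\<in>{1..k}. \<exists>R :: nat \<Rightarrow> 'a set.
        (\<forall>i<l. R i \<in> \<S>) \<and> disjoint_family_on R {..<l} \<and> S - T = (\<Union>i<l. R i))"

definition S_norm :: "'a measure \<Rightarrow> 'a set set \<Rightarrow> ('a \<Rightarrow> real) \<Rightarrow> real" where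
  "S_norm M \<S> f = (SUP S\<in>\<S>. \<bar>set_lebesgue_integral M S f\<bar>)"

definition L1_norm :: "'a measure \<Rightarrow> ('a \<Rightarrow> real) \<Rightarrow> real" where
  "L1_norm M f = (\<integral>x. \<bar>f x\<bar> \<partial>M)"

end

theory Submission
  imports Defs
begin

text \<open>
  (a) holds because every set integral is dominated by the L1 norm.
  For (b) and (c), write g for the conditional expectation of f. Its sign sets
  P = {g > 0} and N = {g < 0} are measurable for the conditioning
  \<sigma>-algebra, which lies inside \<S>, and on such sets g and f have equal integrals.
  Every set integral of g lies between its integral over N and over P, which gives (b);
  the L1 norm of g is the integral of f over P minus the one over N, which gives the
  factor 2 in (c). The lower bound in (c) is (a) applied to g, whose \<S>-norm equals
  that of f when \<S> itself is the conditioning \<sigma>-algebra.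
\<close>

lemma abs_set_integral_le_L1_norm:
  fixes f :: "'a \<Rightarrow> real"
  assumes "integrable M f" "A \<in> sets M"
  shows "\<bar>set_lebesgue_integral M A f\<bar> \<le> L1_norm M f"
proof -
  have "\<bar>set_lebesgue_integral M A f\<bar> \<le> (\<integral>x. \<bar>indicator A x *\<^sub>R f x\<bar> \<partial>M)"
    unfolding set_lebesgue_integral_def by (rule integral_abs_bound)
  also have "\<dots> \<le> (\<integral>x. \<bar>f x\<bar> \<partial>M)"
    using assms integrable_mult_indicator[OF assms(2,1)]
    by (intro integral_mono) (auto simp: indicator_def)
  finally show ?thesis unfolding L1_norm_def .
qed

lemma S_norm_upper:
  fixes f :: "'a \<Rightarrow> real"
  assumes "integrable M f" "\<S> \<subseteq> sets M" "S \<in> \<S>"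
  shows "\<bar>set_lebesgue_integral M S f\<bar> \<le> S_norm M \<S> f"
proof -
  have "bdd_above ((\<lambda>S. \<bar>set_lebesgue_integral M S f\<bar>) ` \<S>)"
    using abs_set_integral_le_L1_norm[OF assms(1)] assms(2) by (auto intro!: bdd_aboveI2)
  then show ?thesis
    unfolding S_norm_def using assms(3) by (rule cSUP_upper2) simp
qed

lemma S_norm_least:
  fixes f :: "'a \<Rightarrow> real"
  assumes "\<S> \<noteq> {}" "\<And>S. S \<in> \<S> \<Longrightarrow> \<bar>set_lebesgue_integral M S f\<bar> \<le> c"
  shows "S_norm M \<S> f \<le> c"
  unfolding S_norm_def using assms by (rule cSUP_least)

lemma S_norm_cong:
  assumes "\<And>S. S \<in> \<S> \<Longrightarrow> set_lebesgue_integral M S f = set_lebesgue_integral M S g"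
  shows "S_norm M \<S> f = S_norm M \<S> g"
  unfolding S_norm_def using assms by (intro SUP_cong) simp_all

lemma S_norm_le_L1_norm:
  fixes f :: "'a \<Rightarrow> real"
  assumes "integrable M f" "\<S> \<subseteq> sets M" "\<S> \<noteq> {}"
  shows "S_norm M \<S> f \<le> L1_norm M f"
  using assms abs_set_integral_le_L1_norm[OF assms(1)] by (intro S_norm_least) auto

lemma k_semiring_nonempty: "k_semiring \<Omega> k \<S> \<Longrightarrow> \<S> \<noteq> {}"
  unfolding k_semiring_def by auto

lemma set_integral_bounded_by_sign_sets:
  fixes g :: "'a \<Rightarrow> real"
  assumes g: "integrable M g" and A: "A \<in> sets M"
  shows "set_lebesgue_integral M {x\<in>space M. g x < 0} g \<le> set_lebesgue_integral M A g"
    and "set_lebesgue_integral M A g \<le> set_lebesgue_integral M {x\<in>space M. 0 < g x} g"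
proof -
  have [measurable]: "g \<in> borel_measurable M" using g by blast
  have int: "integrable M (\<lambda>x. indicator B x *\<^sub>R g x)" if "B \<in> sets M" for B
    using that g by (rule integrable_mult_indicator)
  have N: "{x\<in>space M. g x < 0} \<in> sets M" and P: "{x\<in>space M. 0 < g x} \<in> sets M"
    by measurable
  show "set_lebesgue_integral M {x\<in>space M. g x < 0} g \<le> set_lebesgue_integral M A g"
    unfolding set_lebesgue_integral_def
    by (rule integral_mono[OF int[OF N] int[OF A]]) (simp split: split_indicator)
  show "set_lebesgue_integral M A g \<le> set_lebesgue_integral M {x\<in>space M. 0 < g x} g"
    unfolding set_lebesgue_integral_def
    by (rule integral_mono[OF int[OF A] int[OF P]]) (simp split: split_indicator)
qed

lemma L1_norm_eq_sign_sets:
  fixes g :: "'a \<Rightarrow> real"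
  assumes g: "integrable M g"
  shows "L1_norm M g = set_lebesgue_integral M {x\<in>space M. 0 < g x} g
                       - set_lebesgue_integral M {x\<in>space M. g x < 0} g"
proof -
  let ?P = "{x\<in>space M. 0 < g x}" and ?N = "{x\<in>space M. g x < 0}"
  have [measurable]: "g \<in> borel_measurable M" using g by blast
  have N: "?N \<in> sets M" and P: "?P \<in> sets M"
    by measurable
  have "L1_norm M g = (\<integral>x. indicator ?P x *\<^sub>R g x - indicator ?N x *\<^sub>R g x \<partial>M)"
    unfolding L1_norm_def
    by (rule Bochner_Integration.integral_cong[OF refl]) (simp split: split_indicator)
  also have "\<dots> = set_lebesgue_integral M ?P g - set_lebesgue_integral M ?N g"
    unfolding set_lebesgue_integral_def
    by (rule Bochner_Integration.integral_diff[OF integrable_mult_indicator[OF P g]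
          integrable_mult_indicator[OF N g]])
  finally show ?thesis .
qed

lemma sigma_finite_subalgebra_sigma:
  assumes "finite_measure M" "sigma_algebra (space M) \<B>" "\<B> \<subseteq> sets M"
  shows "sigma_finite_subalgebra M (sigma (space M) \<B>)"
proof -
  have "subalgebra M (sigma (space M) \<B>)"
    using assms(2,3)
    by (simp add: subalgebra_def sigma_algebra.sets_measure_of_eq space_measure_of_conv)
  then interpret finite_measure_subalgebra M "sigma (space M) \<B>"
    using assms(1) by (simp add: finite_measure_subalgebra_def finite_measure_subalgebra_axioms_def)
  show ?thesis by unfold_locales
qed

context
  fixes M :: "'a measure" and \<B> :: "'a set set" and f :: "'a \<Rightarrow> real"
  assumes finite: "finite_measure M"
    and sigma_algebra: "sigma_algebra (space M) \<B>"
    and sub: "\<B> \<subseteq> sets M"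
    and f: "integrable M f"
begin

interpretation sigma_finite_subalgebra M "sigma (space M) \<B>"
  by (rule sigma_finite_subalgebra_sigma[OF finite sigma_algebra sub])

lemma integrable_real_cond_exp_sigma: "integrable M (real_cond_exp M (sigma (space M) \<B>) f)"
  by (rule real_cond_exp_int(1)[OF f])

lemma set_integral_real_cond_exp_sigma:
  assumes "A \<in> \<B>"
  shows "set_lebesgue_integral M A (real_cond_exp M (sigma (space M) \<B>) f)
           = set_lebesgue_integral M A f"
proof -
  have "A \<in> sets (sigma (space M) \<B>)"
    using assms by (simp only: sigma_algebra.sets_measure_of_eq[OF sigma_algebra])
  then show ?thesis by (rule real_cond_exp_intA[OF f, symmetric])
qed

lemma real_cond_exp_sigma_sign_sets:
  defines "g \<equiv> real_cond_exp M (sigma (space M) \<B>) f"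
  shows "{x\<in>space M. 0 < g x} \<in> \<B>" and "{x\<in>space M. g x < 0} \<in> \<B>"
proof -
  have g: "g \<in> borel_measurable (sigma (space M) \<B>)"
    unfolding g_def by (rule borel_measurable_cond_exp)
  have "{x\<in>space (sigma (space M) \<B>). 0 < g x} \<in> sets (sigma (space M) \<B>)"
    "{x\<in>space (sigma (space M) \<B>). g x < 0} \<in> sets (sigma (space M) \<B>)"
    using g[unfolded borel_measurable_iff_greater] g[unfolded borel_measurable_iff_less] by blast+
  then show "{x\<in>space M. 0 < g x} \<in> \<B>" "{x\<in>space M. g x < 0} \<in> \<B>"
    by (simp_all only: space_measure_of_conv sigma_algebra.sets_measure_of_eq[OF sigma_algebra])
qed

end

lemma S_norm_real_cond_exp_le:
  fixes f :: "'a \<Rightarrow> real"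
  assumes "finite_measure M" "sigma_algebra (space M) \<B>" "\<B> \<subseteq> \<S>" "\<S> \<subseteq> sets M"
    "integrable M f" "\<S> \<noteq> {}"
  shows "S_norm M \<S> (real_cond_exp M (sigma (space M) \<B>) f) \<le> S_norm M \<S> f"
proof (rule S_norm_least[OF assms(6)])
  fix S assume "S \<in> \<S>"
  let ?g = "real_cond_exp M (sigma (space M) \<B>) f"
  let ?P = "{x\<in>space M. 0 < ?g x}" and ?N = "{x\<in>space M. ?g x < 0}"
  have \<B>: "\<B> \<subseteq> sets M" using assms(3,4) by auto
  note sign = real_cond_exp_sigma_sign_sets[OF assms(1,2) \<B> assms(5)]
  note cond = set_integral_real_cond_exp_sigma[OF assms(1,2) \<B> assms(5)]
  have "S \<in> sets M" using \<open>S \<in> \<S>\<close> assms(4) by auto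
  then have "set_lebesgue_integral M ?N ?g \<le> set_lebesgue_integral M S ?g"
    "set_lebesgue_integral M S ?g \<le> set_lebesgue_integral M ?P ?g"
    using set_integral_bounded_by_sign_sets
      integrable_real_cond_exp_sigma[OF assms(1,2) \<B> assms(5)] by blast+
  moreover have "set_lebesgue_integral M ?P ?g = set_lebesgue_integral M ?P f"
    "set_lebesgue_integral M ?N ?g = set_lebesgue_integral M ?N f"
    using cond sign by simp_all
  moreover have "\<bar>set_lebesgue_integral M ?P f\<bar> \<le> S_norm M \<S> f"
    "\<bar>set_lebesgue_integral M ?N f\<bar> \<le> S_norm M \<S> f"
    using S_norm_upper[OF assms(5,4)] sign assms(3) by auto
  ultimately show "\<bar>set_lebesgue_integral M S ?g\<bar> \<le> S_norm M \<S> f" by linarith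
qed

lemma L1_norm_real_cond_exp_le_twice_S_norm:
  fixes f :: "'a \<Rightarrow> real"
  assumes "finite_measure M" "sigma_algebra (space M) \<S>" "\<S> \<subseteq> sets M" "integrable M f"
  shows "L1_norm M (real_cond_exp M (sigma (space M) \<S>) f) \<le> 2 * S_norm M \<S> f"
proof -
  let ?g = "real_cond_exp M (sigma (space M) \<S>) f"
  let ?P = "{x\<in>space M. 0 < ?g x}" and ?N = "{x\<in>space M. ?g x < 0}"
  note sign = real_cond_exp_sigma_sign_sets[OF assms]
  have "L1_norm M ?g = set_lebesgue_integral M ?P f - set_lebesgue_integral M ?N f"
    using L1_norm_eq_sign_sets[OF integrable_real_cond_exp_sigma[OF assms]]
      set_integral_real_cond_exp_sigma[OF assms] sign by simp
  moreover have "\<bar>set_lebesgue_integral M ?P f\<bar> \<le> S_norm M \<S> f"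
    "\<bar>set_lebesgue_integral M ?N f\<bar> \<le> S_norm M \<S> f"
    using S_norm_upper[OF assms(4,3)] sign by auto
  ultimately show ?thesis by linarith
qed

lemma S_norm_le_L1_norm_real_cond_exp:
  fixes f :: "'a \<Rightarrow> real"
  assumes "finite_measure M" "sigma_algebra (space M) \<S>" "\<S> \<subseteq> sets M" "integrable M f"
  shows "S_norm M \<S> f \<le> L1_norm M (real_cond_exp M (sigma (space M) \<S>) f)"
proof -
  have "S_norm M \<S> f = S_norm M \<S> (real_cond_exp M (sigma (space M) \<S>) f)"
    using set_integral_real_cond_exp_sigma[OF assms] by (intro S_norm_cong) simp
  also have "\<dots> \<le> L1_norm M (real_cond_exp M (sigma (space M) \<S>) f)"
    using integrable_real_cond_exp_sigma[OF assms] assms(2,3)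
    by (intro S_norm_le_L1_norm) (auto simp: sigma_algebra_iff2)
  finally show ?thesis .
qed

theorem lemma2p5:
  fixes M :: "'a measure" and k :: nat and \<S> :: "'a set set" and f :: "'a \<Rightarrow> real"
  assumes "prob_space M"
    and "k \<ge> 1"
    and "k_semiring (space M) k \<S>"
    and "\<S> \<subseteq> sets M"
    and "integrable M f"
  shows "S_norm M \<S> f \<le> L1_norm M f
    \<and> (\<forall>\<B>. sigma_algebra (space M) \<B> \<and> \<B> \<subseteq> \<S> \<longrightarrow>
          S_norm M \<S> (real_cond_exp M (sigma (space M) \<B>) f) \<le> S_norm M \<S> f)
    \<and> (sigma_algebra (space M) \<S> \<longrightarrow>
          S_norm M \<S> f \<le> L1_norm M (real_cond_exp M (sigma (space M) \<S>) f)
          \<and> L1_norm M (real_cond_exp M (sigma (space M) \<S>) f) \<le> 2 * S_norm M \<S> f)"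
proof (intro conjI allI impI)
  have finite: "finite_measure M"
    using assms(1) by (simp add: prob_space_def)
  have nonempty: "\<S> \<noteq> {}"
    using assms(3) by (rule k_semiring_nonempty)
  show "S_norm M \<S> f \<le> L1_norm M f"
    using assms(5,4) nonempty by (rule S_norm_le_L1_norm)
  show "S_norm M \<S> (real_cond_exp M (sigma (space M) \<B>) f) \<le> S_norm M \<S> f"
    if "sigma_algebra (space M) \<B> \<and> \<B> \<subseteq> \<S>" for \<B>
    using that S_norm_real_cond_exp_le[OF finite _ _ assms(4,5) nonempty] by blast
  show "S_norm M \<S> f \<le> L1_norm M (real_cond_exp M (sigma (space M) \<S>) f)"
    and "L1_norm M (real_cond_exp M (sigma (space M) \<S>) f) \<le> 2 * S_norm M \<S> f"
    if "sigma_algebra (space M) \<S>"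
    using that assms(4,5) finite
    by (simp_all add: S_norm_le_L1_norm_real_cond_exp L1_norm_real_cond_exp_le_twice_S_norm)
qed

end
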